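(* Let $G$ be a $k$-uniform $s$-cycle with $k\ge 3$ and $\frac{k}{2}<s<k-1$, and write $k=q(k-s)+r$ with integers $q$ and $1\le r<k-s$. Then $\lambda(\mathcal{Q})=q+1+(q+1)\alpha_*^{k-(q+1)r}$, where $\alpha_*$ is the unique root in $(0,1)$ of $(q+1)\alpha^k+\alpha^{(q+1)r}-q=0$. When $k$ is even, also $\lambda(\mathcal{L})=q+1+(q+1)\alpha_*^{k-(q+1)r}$.
   Context: A $k$-uniform $s$-cycle with $m$ edges has vertex set $\mathbb{Z}_n$, $n=m(k-s)$ (vertex $n+i$ identified with $i$), and edges $e_j=\{j(k-s)+1,\ldots,j(k-s)+k\}$, $j=0,\ldots,m-1$; it is assumed that $n\ge 2k-s$. The degree $d_i$ of a vertex is the number of edges containing it. For a real tensor $\mathcal{T}$ of order $k$ and dimension $n$, $\lambda\in\mathbb{R}$ is an H-eigenvalue if there is nonzero $\mathbf{x}\in\mathbb{R}^n$ with $(\mathcal{T}\mathbf{x}^{k-1})_i=\lambda x_i^{k-1}$ for all $i$, where $(\mathcal{T}\mathbf{x}^{k-1})_i=\sum_{i_2,\ldots,i_k}t_{ii_2\ldots i_k}x_{i_2}\cdots x_{i_k}$; $\lambda(\mathcal{T})$ is the largest H-eigenvalue. The adjacency tensor $\mathcal{A}$ has entries $1/(k-1)!$ at $(i_1,\ldots,i_k)$ with $\{i_1,\ldots,i_k\}$ an edge and $0$ otherwise; $\mathcal{D}$ is diagonal with entries $d_i$; $\mathcal{L}=\mathcal{D}-\mathcal{A}$, $\mathcal{Q}=\mathcal{D}+\mathcal{A}$.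 *)

theory Defs
  imports Complex_Main
begin

text \<open>Vertices of the s-cycle are 0..n-1 (representing Z_n), n = m(k-s).
  Edge e_j = {j(k-s)+1, ..., j(k-s)+k} taken mod n, for j < m.\<close>

definition scycle_edge :: "nat \<Rightarrow> nat \<Rightarrow> nat \<Rightarrow> nat \<Rightarrow> nat set" where
  "scycle_edge k s m j = {(j*(k-s)+t) mod (m*(k-s)) | t. 1 \<le> t \<and> t \<le> k}"

definition scycle_edges :: "nat \<Rightarrow> nat \<Rightarrow> nat \<Rightarrow> nat set set" where
  "scycle_edges k s m = scycle_edge k s m ` {..<m}"

definition scycle_deg :: "nat \<Rightarrow> nat \<Rightarrow> nat \<Rightarrow> nat \<Rightarrow> nat" where
  "scycle_deg k s m i = card {e \<in> scycle_edges k s m. i \<in> e}"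

text \<open>A real tensor of order k, dimension n: a function on index lists of length k
  with entries in {0..<n}.\<close>
type_synonym tensor = "nat list \<Rightarrow> real"

definition adj_tensor :: "nat \<Rightarrow> nat \<Rightarrow> nat \<Rightarrow> tensor" where
  "adj_tensor k s m is = (if set is \<in> scycle_edges k s m then 1 / fact (k-1) else 0)"

definition deg_tensor :: "nat \<Rightarrow> nat \<Rightarrow> nat \<Rightarrow> tensor" where
  "deg_tensor k s m is = (if is \<noteq> [] \<and> (\<forall>j \<in> set is. j = hd is)
      then real (scycle_deg k s m (hd is)) else 0)"

definition lap_tensor :: "nat \<Rightarrow> nat \<Rightarrow> nat \<Rightarrow> tensor" where
  "lap_tensor k s m is = deg_tensor k s m is - adj_tensor k s m is"

definition slap_tensor :: "nat \<Rightarrow> nat \<Rightarrow> nat \<Rightarrow> tensor" where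
  "slap_tensor k s m is = deg_tensor k s m is + adj_tensor k s m is"

definition tensor_apply :: "nat \<Rightarrow> nat \<Rightarrow> tensor \<Rightarrow> (nat \<Rightarrow> real) \<Rightarrow> nat \<Rightarrow> real" where
  "tensor_apply k n T x i =
     (\<Sum>ws \<in> {ws. length ws = k - 1 \<and> set ws \<subseteq> {..<n}}. T (i # ws) * prod_list (map x ws))"

definition is_H_eigenvalue :: "nat \<Rightarrow> nat \<Rightarrow> tensor \<Rightarrow> real \<Rightarrow> bool" where
  "is_H_eigenvalue k n T lam \<longleftrightarrow>
     (\<exists>x :: nat \<Rightarrow> real. (\<exists>i<n. x i \<noteq> 0) \<and>
        (\<forall>i<n. tensor_apply k n T x i = lam * x i ^ (k - 1)))"

definition is_largest_H_eigenvalue :: "nat \<Rightarrow> nat \<Rightarrow> tensor \<Rightarrow> real \<Rightarrow> bool" where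
  "is_largest_H_eigenvalue k n T lam \<longleftrightarrow>
     is_H_eigenvalue k n T lam \<and> (\<forall>\<mu>. is_H_eigenvalue k n T \<mu> \<longrightarrow> \<mu> \<le> lam)"

end

theory Submission
  imports Defs "HOL-Combinatorics.Multiset_Permutations"
begin

text \<open>Write d = k - s. A vertex v lies in q + 1 edges if v mod d \<in> {1..r} and in q edges
  otherwise, because the k = q d + r consecutive vertices of an edge meet every residue class
  mod d exactly q times and the classes 1..r once more. Hence the positive vector y that is 1
  on the first kind of vertex and \<alpha> on the second has product \<alpha>^(q(d-r)) over every edge, and
  (Q y^(k-1))_v = \<lambda> y_v^(k-1) with \<lambda> = (q+1)(1 + \<alpha>^(k-(q+1)r)) for all v exactly when
  (q+1) \<alpha>^k + \<alpha>^((q+1)r) = q. Comparing any eigenvector x with y at a coordinate maximising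
  |x_v| / y_v (a Collatz-Wielandt bound) gives |\<mu>| \<le> \<lambda> for every H-eigenvalue \<mu> of a tensor
  dominated entrywise by Q, in particular of Q and of L. For even k, the sign pattern that is
  -1 on the residues 0 and 1 has product -1 over every edge (an edge has 2q+1 such vertices),
  and multiplying y by it yields an eigenvector of L for the same eigenvalue.\<close>

lemma finite_index_lists: "finite {ws. length ws = l \<and> set ws \<subseteq> {..<n::nat}}"
  using finite_lists_length_eq[of "{..<n}" l] by (simp add: conj_commute)

lemma tensor_apply_diagonal:
  assumes "i < n"
  shows "tensor_apply k n (\<lambda>is. if is \<noteq> [] \<and> (\<forall>j\<in>set is. j = hd is) then D (hd is) else 0) x i
       = D i * x i ^ (k - 1)"
proof -
  have "tensor_apply k n (\<lambda>is. if is \<noteq> [] \<and> (\<forall>j\<in>set is. j = hd is) then D (hd is) else 0) x i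
      = (\<Sum>ws\<in>{ws. length ws = k - 1 \<and> set ws \<subseteq> {..<n}}.
           if ws = replicate (k - 1) i then D i * x i ^ (k - 1) else 0)"
    unfolding tensor_apply_def
  proof (rule sum.cong[OF refl])
    fix ws assume "ws \<in> {ws. length ws = k - 1 \<and> set ws \<subseteq> {..<n}}"
    then have "(\<forall>j\<in>set ws. j = i) \<longleftrightarrow> ws = replicate (k - 1) i"
      using replicate_length_same[of ws i] by auto
    then show "(if i # ws \<noteq> [] \<and> (\<forall>j\<in>set (i # ws). j = hd (i # ws)) then D (hd (i # ws)) else 0)
          * prod_list (map x ws) = (if ws = replicate (k - 1) i then D i * x i ^ (k - 1) else 0)"
      by auto
  qed
  also have "\<dots> = D i * x i ^ (k - 1)"
    using assms finite_index_lists by (simp add: sum.delta' set_replicate_conv_if)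
  finally show ?thesis .
qed

lemma lists_completing_edge:
  fixes e :: "nat set"
  assumes e: "card e = k" "i \<in> e" "e \<subseteq> {..<n}"
  shows "{ws. length ws = k - 1 \<and> set ws \<subseteq> {..<n} \<and> set (i # ws) = e} = permutations_of_set (e - {i})"
proof (intro set_eqI iffI)
  have fin: "finite e" using finite_subset[OF e(3)] by simp
  then have card_rest: "card (e - {i}) = k - 1" using e by simp
  fix ws
  { assume "ws \<in> {ws. length ws = k - 1 \<and> set ws \<subseteq> {..<n} \<and> set (i # ws) = e}"
    then have len: "length ws = k - 1" and set_ws: "insert i (set ws) = e" by auto
    have "i \<notin> set ws"
    proof
      assume "i \<in> set ws"
      then have "card e \<le> k - 1" using set_ws len card_length[of ws] by (simp add: insert_absorb)
      moreover have "card e > 0" using fin e(2) card_gt_0_iff by blast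
      ultimately show False using e(1) by linarith
    qed
    then have "set ws = e - {i}" using set_ws by auto
    moreover have "distinct ws" using calculation card_rest len by (simp add: card_distinct)
    ultimately show "ws \<in> permutations_of_set (e - {i})" by (simp add: permutations_of_set_def) }
  { assume "ws \<in> permutations_of_set (e - {i})"
    then have "set ws = e - {i}" "distinct ws" by (auto dest: permutations_of_setD)
    moreover from this have "length ws = k - 1" using card_rest distinct_card by metis
    ultimately show "ws \<in> {ws. length ws = k - 1 \<and> set ws \<subseteq> {..<n} \<and> set (i # ws) = e}"
      using e by auto }
qed

lemma tensor_apply_hypergraph_adjacency:
  fixes E :: "nat set set" and x :: "nat \<Rightarrow> real"
  assumes fin: "finite E" and card: "\<And>e. e \<in> E \<Longrightarrow> card e = k"
    and sub: "\<And>e. e \<in> E \<Longrightarrow> e \<subseteq> {..<n}"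
  shows "tensor_apply k n (\<lambda>is. if set is \<in> E then 1 / fact (k - 1) else 0) x i
       = (\<Sum>e\<in>{e\<in>E. i \<in> e}. prod x (e - {i}))"
proof -
  define W where "W = {ws. length ws = k - 1 \<and> set ws \<subseteq> {..<n}}"
  define c :: real where "c = 1 / fact (k - 1)"
  have "finite W"
    unfolding W_def by (rule finite_index_lists)
  have "tensor_apply k n (\<lambda>is. if set is \<in> E then c else 0) x i
      = (\<Sum>ws\<in>W. if set (i # ws) \<in> E then c * prod_list (map x ws) else 0)"
    unfolding tensor_apply_def W_def by (rule sum.cong) auto
  also have "\<dots> = (\<Sum>ws\<in>{ws\<in>W. set (i # ws) \<in> E}. c * prod_list (map x ws))"
    using \<open>finite W\<close> by (simp add: sum.inter_filter)
  also have "\<dots> = (\<Sum>e\<in>{e\<in>E. i \<in> e}.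
      \<Sum>ws\<in>{ws\<in>{ws\<in>W. set (i # ws) \<in> E}. set (i # ws) = e}. c * prod_list (map x ws))"
    by (rule sum.group[symmetric]) (use \<open>finite W\<close> fin in auto)
  also have "\<dots> = (\<Sum>e\<in>{e\<in>E. i \<in> e}. prod x (e - {i}))"
  proof (rule sum.cong[OF refl])
    fix e assume eE: "e \<in> {e\<in>E. i \<in> e}"
    then have e: "card e = k" "i \<in> e" "e \<subseteq> {..<n}" using card sub by auto
    then have "finite e" using finite_subset[OF e(3)] by simp
    have "{ws\<in>{ws\<in>W. set (i # ws) \<in> E}. set (i # ws) = e} = permutations_of_set (e - {i})"
      using lists_completing_edge[OF e] eE by (auto simp: W_def)
    moreover have "prod_list (map x ws) = prod x (e - {i})" if "ws \<in> permutations_of_set (e - {i})" for ws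
      using that by (metis permutations_of_setD prod.distinct_set_conv_list)
    ultimately show "(\<Sum>ws\<in>{ws\<in>{ws\<in>W. set (i # ws) \<in> E}. set (i # ws) = e}.
        c * prod_list (map x ws)) = prod x (e - {i})"
      using e \<open>finite e\<close> by (simp add: c_def)
  qed
  finally show ?thesis unfolding c_def .
qed

lemma tensor_apply_add:
  "tensor_apply k n (\<lambda>is. A is + B is) x i = tensor_apply k n A x i + tensor_apply k n B x i"
  by (simp add: tensor_apply_def distrib_right sum.distrib)

lemma tensor_apply_diff:
  "tensor_apply k n (\<lambda>is. A is - B is) x i = tensor_apply k n A x i - tensor_apply k n B x i"
  by (simp add: tensor_apply_def left_diff_distrib sum_subtractf)

lemma abs_prod_list_le:
  fixes x y :: "nat \<Rightarrow> real"
  assumes "\<forall>v<n. \<bar>x v\<bar> \<le> t * y v" and "\<forall>v<n. 0 < y v" and "0 \<le> t" and "set ws \<subseteq> {..<n}"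
  shows "\<bar>prod_list (map x ws)\<bar> \<le> t ^ length ws * prod_list (map y ws)"
  using assms(4)
proof (induction ws)
  case Nil
  then show ?case by simp
next
  case (Cons v ws)
  then have "\<bar>x v\<bar> \<le> t * y v" "\<bar>prod_list (map x ws)\<bar> \<le> t ^ length ws * prod_list (map y ws)"
    using assms(1) by auto
  then have "\<bar>x v\<bar> * \<bar>prod_list (map x ws)\<bar> \<le> (t * y v) * (t ^ length ws * prod_list (map y ws))"
    by (rule mult_mono) (use Cons.prems assms(2,3) in auto)
  then show ?case by (simp add: abs_mult algebra_simps)
qed

lemma abs_tensor_apply_le:
  fixes T Q :: tensor
  assumes "\<forall>v<n. \<bar>x v\<bar> \<le> t * y v" and "\<forall>v<n. 0 < y v" and "0 \<le> t"
    and "\<And>is. \<bar>T is\<bar> \<le> Q is"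
  shows "\<bar>tensor_apply k n T x i\<bar> \<le> t ^ (k - 1) * tensor_apply k n Q y i"
proof -
  have "\<bar>tensor_apply k n T x i\<bar>
      \<le> (\<Sum>ws\<in>{ws. length ws = k - 1 \<and> set ws \<subseteq> {..<n}}.
            \<bar>T (i # ws)\<bar> * \<bar>prod_list (map x ws)\<bar>)"
    unfolding tensor_apply_def by (rule order_trans[OF sum_abs]) (simp add: abs_mult)
  also have "\<dots> \<le> (\<Sum>ws\<in>{ws. length ws = k - 1 \<and> set ws \<subseteq> {..<n}}.
                     Q (i # ws) * (t ^ (k - 1) * prod_list (map y ws)))"
  proof (rule sum_mono, rule mult_mono)
    fix ws assume "ws \<in> {ws. length ws = k - 1 \<and> set ws \<subseteq> {..<n}}"
    then show "\<bar>prod_list (map x ws)\<bar> \<le> t ^ (k - 1) * prod_list (map y ws)"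
      using abs_prod_list_le[OF assms(1-3), of ws] by simp
  qed (use assms(4) in \<open>auto intro: order_trans[OF abs_ge_zero]\<close>)
  also have "\<dots> = t ^ (k - 1) * tensor_apply k n Q y i"
    unfolding tensor_apply_def by (simp add: sum_distrib_left algebra_simps)
  finally show ?thesis .
qed

lemma abs_H_eigenvalue_le:
  fixes T Q :: tensor
  assumes y_pos: "\<forall>v<n. 0 < y v" and dominated: "\<And>is. \<bar>T is\<bar> \<le> Q is"
    and eigen: "\<forall>i<n. tensor_apply k n Q y i = lam * y i ^ (k - 1)"
    and "is_H_eigenvalue k n T mu"
  shows "\<bar>mu\<bar> \<le> lam"
proof -
  obtain x i0 where "i0 < n" "x i0 \<noteq> 0" and x: "\<forall>i<n. tensor_apply k n T x i = mu * x i ^ (k - 1)"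
    using assms(4) unfolding is_H_eigenvalue_def by blast
  define t where "t = Max ((\<lambda>v. \<bar>x v\<bar> / y v) ` {..<n})"
  obtain i where i: "i < n" "t = \<bar>x i\<bar> / y i"
    using Max_in[of "(\<lambda>v. \<bar>x v\<bar> / y v) ` {..<n}"] \<open>i0 < n\<close> unfolding t_def by fastforce
  have x_le: "\<forall>v<n. \<bar>x v\<bar> \<le> t * y v"
  proof (intro allI impI)
    fix v assume "v < n"
    then have "\<bar>x v\<bar> / y v \<le> t" unfolding t_def by simp
    then show "\<bar>x v\<bar> \<le> t * y v" using y_pos \<open>v < n\<close> by (simp add: divide_le_eq)
  qed
  have "0 < \<bar>x i0\<bar> / y i0" using \<open>x i0 \<noteq> 0\<close> \<open>i0 < n\<close> y_pos by simp
  also have "\<dots> \<le> t" unfolding t_def using \<open>i0 < n\<close> by simp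
  finally have "0 < t" .
  have x_i: "\<bar>x i\<bar> = t * y i" using i y_pos[rule_format, OF i(1)] by simp
  have "\<bar>mu\<bar> * \<bar>x i\<bar> ^ (k - 1) = \<bar>tensor_apply k n T x i\<bar>"
    using x i by (simp add: abs_mult power_abs)
  also have "\<dots> \<le> t ^ (k - 1) * tensor_apply k n Q y i"
    using abs_tensor_apply_le[OF x_le y_pos _ dominated] \<open>0 < t\<close> by simp
  also have "\<dots> = lam * \<bar>x i\<bar> ^ (k - 1)"
    using eigen i x_i by (simp add: power_mult_distrib)
  finally have "\<bar>mu\<bar> * \<bar>x i\<bar> ^ (k - 1) \<le> lam * \<bar>x i\<bar> ^ (k - 1)" .
  moreover have "0 < \<bar>x i\<bar> ^ (k - 1)" using \<open>0 < t\<close> y_pos i(1) x_i by simp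
  ultimately show ?thesis by simp
qed

lemma is_largest_H_eigenvalueI:
  fixes T Q :: tensor
  assumes "is_H_eigenvalue k n T lam"
    and "\<forall>v<n. 0 < y v" and "\<And>is. \<bar>T is\<bar> \<le> Q is"
    and "\<forall>i<n. tensor_apply k n Q y i = lam * y i ^ (k - 1)"
  shows "is_largest_H_eigenvalue k n T lam"
  using assms abs_H_eigenvalue_le[OF assms(2-4)] unfolding is_largest_H_eigenvalue_def
  by fastforce

lemma abs_signless_laplacian_le: "\<bar>slap_tensor k s m is\<bar> \<le> slap_tensor k s m is"
  by (simp add: slap_tensor_def deg_tensor_def adj_tensor_def)

lemma abs_laplacian_le_signless_laplacian: "\<bar>lap_tensor k s m is\<bar> \<le> slap_tensor k s m is"
proof -
  have "0 \<le> deg_tensor k s m is" "0 \<le> adj_tensor k s m is"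
    by (simp_all add: deg_tensor_def adj_tensor_def)
  then show ?thesis unfolding lap_tensor_def slap_tensor_def by (simp add: abs_le_iff)
qed

lemma prod_mod_period:
  fixes f :: "nat \<Rightarrow> 'a::comm_monoid_mult"
  assumes "0 < d" and "r < d"
  shows "(\<Prod>t\<in>{1..q * d + r}. f (t mod d)) = (\<Prod>c<d. f c) ^ q * (\<Prod>t\<in>{1..r}. f t)"
proof (induction q)
  case 0
  show ?case using assms(2) by (auto intro: prod.cong)
next
  case (Suc q)
  have "(\<Prod>t\<in>{1..d}. f (t mod d)) = (\<Prod>c<d. f c)"
  proof -
    have "{1..d} = insert d {1..<d}" "{..<d} = insert 0 {1..<d}" using assms(1) by auto
    moreover have "(\<Prod>t\<in>{1..<d}. f (t mod d)) = (\<Prod>t\<in>{1..<d}. f t)"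
      by (rule prod.cong) auto
    ultimately show ?thesis by (simp add: mult.commute)
  qed
  moreover have "(\<Prod>t\<in>{d + 1..d + (q * d + r)}. f (t mod d)) = (\<Prod>t\<in>{1..q * d + r}. f (t mod d))"
    using prod.shift_bounds_cl_nat_ivl[of "\<lambda>t. f (t mod d)" 1 d "q * d + r"] by (simp add: add.commute)
  ultimately show ?case
    using prod.ub_add_nat[of 1 d "\<lambda>t. f (t mod d)" "q * d + r"] Suc.IH
    by (simp add: algebra_simps)
qed

lemma unique_root_in_unit_interval:
  fixes b c :: real and k p :: nat
  assumes "0 < k" and "0 < p" and "0 \<le> c" and "0 < b" and "b < c + 1"
  shows "\<exists>!a. 0 < a \<and> a < 1 \<and> c * a ^ k + a ^ p - b = 0"
proof -
  define g where "g a = c * a ^ k + a ^ p - b" for a :: real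
  have g_mono: "g a < g a'" if "0 \<le> a" "a < a'" for a a'
  proof -
    have "a ^ p < a' ^ p" using that \<open>0 < p\<close> by (intro power_strict_mono) auto
    moreover have "c * a ^ k \<le> c * a' ^ k" using that \<open>0 \<le> c\<close> by (intro mult_left_mono power_mono) auto
    ultimately show ?thesis unfolding g_def by linarith
  qed
  have "g 0 < 0" "0 < g 1" using assms by (simp_all add: g_def power_0_left)
  moreover have "\<forall>a. 0 \<le> a \<and> a \<le> 1 \<longrightarrow> isCont g a"
    unfolding g_def by (auto intro!: continuous_intros)
  ultimately obtain a where "0 \<le> a" "a \<le> 1" "g a = 0" using IVT[of g 0 0 1] by force
  with \<open>g 0 < 0\<close> \<open>0 < g 1\<close> have "0 < a \<and> a < 1 \<and> g a = 0" by (auto simp: less_le)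
  moreover have "a' = a" if "0 < a'" "g a' = 0" for a'
    using g_mono[of a a'] g_mono[of a' a] that \<open>0 \<le> a\<close> \<open>g a = 0\<close>
    by (cases a a' rule: linorder_cases) auto
  ultimately show ?thesis unfolding g_def by blast
qed

lemma mult_add_le_mult_add_iff:
  fixes w c q r d :: nat
  assumes "c < d" and "r < d"
  shows "w * d + c \<le> q * d + r \<longleftrightarrow> w < q \<or> (w = q \<and> c \<le> r)"
proof (cases w q rule: linorder_cases)
  case less
  then have "Suc w * d \<le> q * d" by (intro mult_le_mono1) simp
  then show ?thesis using less assms by simp
next
  case greater
  then have "Suc q * d \<le> w * d" by (intro mult_le_mono1) simp
  then show ?thesis using greater assms by simp
qed simp

lemma root_identity_rescaled:
  fixes A P Q R :: real
  assumes "Q = (Q + 1) * A + R" and "P * R = A"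
  shows "Q * (A + P) = (Q + 1) * (1 + P) * A"
  using assms by algebra

lemma mod_add_left_cancel_nat: "((a::nat) + x) mod n = (a + y) mod n \<longleftrightarrow> x mod n = y mod n"
  by (simp add: nat_mod_eq_iff)

locale s_cycle =
  fixes k s m q r :: nat
  fixes d n :: nat
  defines d_def: "d \<equiv> k - s" and n_def: "n \<equiv> m * d"
  assumes d_ge_2: "2 \<le> d"
    and k_lt_n: "k < n"
    and k_eq: "k = q * d + r"
    and r_pos: "1 \<le> r"
    and r_lt_d: "r < d"
begin

abbreviation "edge \<equiv> scycle_edge k s m"
abbreviation "edges \<equiv> scycle_edges k s m"

lemma q_pos: "1 \<le> q"
  using k_eq r_lt_d d_def by (cases q) auto

lemma k_pos: "1 \<le> k"
  using k_eq r_pos by simp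

lemma q_lt_m: "q < m"
proof -
  have "q * d < m * d" using k_eq k_lt_n n_def by linarith
  then show ?thesis by simp
qed

lemma edge_eq_image: "edge j = (\<lambda>t. (j * d + t) mod n) ` {1..k}"
  by (auto simp: scycle_edge_def d_def n_def)

lemma inj_on_edge_enum: "inj_on (\<lambda>t. (j * d + t) mod n) {1..k}"
  using k_lt_n by (intro inj_onI) (simp add: mod_add_left_cancel_nat)

lemma card_edge: "card (edge j) = k"
  unfolding edge_eq_image card_image[OF inj_on_edge_enum] by simp

lemma n_pos: "0 < n"
  using k_lt_n by linarith

lemma m_pos: "0 < m"
  using n_pos n_def by simp

lemma edge_subset: "edge j \<subseteq> {..<n}"
  using n_pos by (auto simp: edge_eq_image)

lemma finite_edges: "finite edges"
  by (simp add: scycle_edges_def)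

lemma prod_edge_mod:
  fixes f :: "nat \<Rightarrow> 'a::comm_monoid_mult"
  shows "(\<Prod>v\<in>edge j. f (v mod d)) = (\<Prod>c<d. f c) ^ q * (\<Prod>t\<in>{1..r}. f t)"
proof -
  have "(\<Prod>v\<in>edge j. f (v mod d)) = (\<Prod>t\<in>{1..k}. f (t mod d))"
    unfolding edge_eq_image prod.reindex[OF inj_on_edge_enum]
    by (auto simp: mod_mod_cancel n_def intro: prod.cong)
  also have "\<dots> = (\<Prod>c<d. f c) ^ q * (\<Prod>t\<in>{1..r}. f t)"
    using prod_mod_period[of d r f q] d_ge_2 r_lt_d k_eq by simp
  finally show ?thesis .
qed

text \<open>Edge j consists of the k vertices following j d, and vertex i is the
  (offset i j * d + i mod d)-th of them when this number lies in 1..k.\<close>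

definition offset :: "nat \<Rightarrow> nat \<Rightarrow> nat" where
  "offset i j = (i div d + m - j) mod m"

lemma offset_lt: "offset i j < m"
  using m_pos by (simp add: offset_def)

lemma add_offset_mod:
  assumes "i < n" and "j < m"
  shows "(j + offset i j) mod m = i div d"
proof -
  have "i div d < m" using assms(1) n_def by (simp add: less_mult_imp_div_less)
  then show ?thesis
    using assms(2) by (simp add: offset_def mod_add_right_eq)
qed

lemma vertex_from_offset:
  assumes "i < n" and "j < m"
  shows "(j * d + (offset i j * d + i mod d)) mod n = i"
proof -
  have "(j * d + (offset i j * d + i mod d)) mod (d * m) = d * ((j + offset i j) mod m) + i mod d"
    using d_ge_2 by (simp add: mod_mult2_eq algebra_simps)
  then show ?thesis
    using add_offset_mod[OF assms] by (simp add: n_def mult.commute)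
qed

lemma mem_edge_iff:
  assumes "i < n" and "j < m"
  shows "i \<in> edge j \<longleftrightarrow> 1 \<le> offset i j * d + i mod d \<and> offset i j * d + i mod d \<le> k"
proof -
  define u where "u = offset i j * d + i mod d"
  have "Suc (offset i j) * d \<le> m * d" using offset_lt[of i j] by (intro mult_le_mono1) simp
  moreover have "i mod d < d" using d_ge_2 by simp
  ultimately have "u < n" by (simp add: u_def n_def)
  have "(j * d + t) mod n = i \<longleftrightarrow> t = u" if "t \<le> k" for t
    using vertex_from_offset[OF assms] that k_lt_n \<open>u < n\<close>
    by (metis u_def mod_add_left_cancel_nat mod_less le_less_trans)
  moreover have "i \<in> edge j \<longleftrightarrow> (\<exists>t\<in>{1..k}. (j * d + t) mod n = i)"
    by (auto simp: edge_eq_image)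
  ultimately show ?thesis by (auto simp: u_def)
qed

lemma inj_on_offset:
  assumes "i < n"
  shows "inj_on (offset i) {..<m}"
proof (rule inj_onI)
  fix j j' assume "j \<in> {..<m}" "j' \<in> {..<m}" "offset i j = offset i j'"
  then have "(offset i j + j) mod m = (offset i j + j') mod m"
    using add_offset_mod[OF assms, of j] add_offset_mod[OF assms, of j'] by (simp add: add.commute)
  then show "j = j'" using \<open>j \<in> {..<m}\<close> \<open>j' \<in> {..<m}\<close> by (simp add: mod_add_left_cancel_nat)
qed

lemma offset_image:
  assumes "i < n"
  shows "offset i ` {..<m} = {..<m}"
  using inj_on_offset[OF assms] offset_lt by (intro endo_inj_surj) auto

lemma inj_on_edge: "inj_on edge {..<m}"
proof (rule inj_onI)
  fix j j' assume "j \<in> {..<m}" "j' \<in> {..<m}" and same: "edge j = edge j'"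
  then have j: "j < m" "j' < m" by simp_all
  have "Suc j * d \<le> n" unfolding n_def using j(1) by (intro mult_le_mono1) simp
  then have jd: "j * d < n" "j * d + 1 < n" using d_ge_2 by simp_all
  have div_mod: "(j * d + 1) div d = j" "(j * d + 1) mod d = 1" "j * d div d = j"
    using d_ge_2 div_mult_self1[of d 1 j] mod_mult_self1[of 1 j d] by (simp_all add: add.commute)
  have "offset (j * d) j = 0" "offset (j * d + 1) j = 0"
    using j(1) div_mod by (simp_all add: offset_def)
  then have "j * d + 1 \<in> edge j'" "j * d \<notin> edge j'"
    using mem_edge_iff[OF jd(2) j(1)] mem_edge_iff[OF jd(1) j(1)] same k_pos div_mod
    by simp_all
  moreover have "offset (j * d + 1) j' = offset (j * d) j'"
    using div_mod by (simp add: offset_def)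
  ultimately have "offset (j * d) j' * d + 1 \<le> k" "\<not> (1 \<le> offset (j * d) j' * d \<and> offset (j * d) j' * d \<le> k)"
    using mem_edge_iff[OF jd(2) j(2)] mem_edge_iff[OF jd(1) j(2)] div_mod by auto
  then have "offset (j * d) j' = 0"
    using d_ge_2 by (cases "offset (j * d) j'") auto
  then show "j = j'"
    using add_offset_mod[OF jd(1) j(2)] j(2) div_mod by simp
qed

lemma card_offsets_in_edge:
  assumes "c < d"
  shows "card {w\<in>{..<m}. 1 \<le> w * d + c \<and> w * d + c \<le> k} = (if 1 \<le> c \<and> c \<le> r then q + 1 else q)"
proof -
  have le_k: "w * d + c \<le> k \<longleftrightarrow> w < q \<or> (w = q \<and> c \<le> r)" for w
    using mult_add_le_mult_add_iff[OF assms r_lt_d] k_eq by simp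
  have "{w\<in>{..<m}. 1 \<le> w * d + c \<and> w * d + c \<le> k}
      = (if c = 0 then {1..q} else if c \<le> r then {..q} else {..<q})"
  proof (rule set_eqI)
    fix w
    have "1 \<le> w * d + c \<longleftrightarrow> c \<noteq> 0 \<or> w \<noteq> 0" using d_ge_2 by (cases w) auto
    then show "w \<in> {w\<in>{..<m}. 1 \<le> w * d + c \<and> w * d + c \<le> k}
        \<longleftrightarrow> w \<in> (if c = 0 then {1..q} else if c \<le> r then {..q} else {..<q})"
      using le_k[of w] q_lt_m by auto
  qed
  then show ?thesis by simp
qed

lemma degree:
  assumes "i < n"
  shows "scycle_deg k s m i = (if 1 \<le> i mod d \<and> i mod d \<le> r then q + 1 else q)"
proof -
  define P where "P w \<longleftrightarrow> 1 \<le> w * d + i mod d \<and> w * d + i mod d \<le> k" for w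
  have "{e\<in>edges. i \<in> e} = edge ` {j\<in>{..<m}. i \<in> edge j}"
    by (auto simp: scycle_edges_def)
  moreover have "inj_on edge {j\<in>{..<m}. i \<in> edge j}"
    by (rule inj_on_subset[OF inj_on_edge]) auto
  ultimately have "scycle_deg k s m i = card {j\<in>{..<m}. i \<in> edge j}"
    unfolding scycle_deg_def by (simp add: card_image)
  also have "{j\<in>{..<m}. i \<in> edge j} = {j\<in>{..<m}. P (offset i j)}"
    using mem_edge_iff[OF assms] by (auto simp: P_def)
  also have "card \<dots> = card (offset i ` {j\<in>{..<m}. P (offset i j)})"
    by (rule card_image[symmetric], rule inj_on_subset[OF inj_on_offset[OF assms]]) auto
  also have "offset i ` {j\<in>{..<m}. P (offset i j)} = {w\<in>offset i ` {..<m}. P w}"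
    by auto
  also have "\<dots> = {w\<in>{..<m}. P w}"
    by (simp only: offset_image[OF assms])
  also have "card \<dots> = (if 1 \<le> i mod d \<and> i mod d \<le> r then q + 1 else q)"
    unfolding P_def using d_ge_2 by (intro card_offsets_in_edge) simp
  finally show ?thesis .
qed

lemma tensor_apply_laplacians:
  assumes "i < n"
  shows "tensor_apply k n (slap_tensor k s m) x i
       = real (scycle_deg k s m i) * x i ^ (k - 1) + (\<Sum>e\<in>{e\<in>edges. i \<in> e}. prod x (e - {i}))"
    and "tensor_apply k n (lap_tensor k s m) x i
       = real (scycle_deg k s m i) * x i ^ (k - 1) - (\<Sum>e\<in>{e\<in>edges. i \<in> e}. prod x (e - {i}))"
proof -
  have "slap_tensor k s m = (\<lambda>is. deg_tensor k s m is + adj_tensor k s m is)"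
    and "lap_tensor k s m = (\<lambda>is. deg_tensor k s m is - adj_tensor k s m is)"
    by (simp_all add: fun_eq_iff slap_tensor_def lap_tensor_def)
  moreover have "tensor_apply k n (deg_tensor k s m) x i = real (scycle_deg k s m i) * x i ^ (k - 1)"
    using tensor_apply_diagonal[OF assms, of k "\<lambda>v. real (scycle_deg k s m v)" x]
    by (simp add: deg_tensor_def[abs_def])
  moreover have "tensor_apply k n (adj_tensor k s m) x i = (\<Sum>e\<in>{e\<in>edges. i \<in> e}. prod x (e - {i}))"
    using tensor_apply_hypergraph_adjacency[OF finite_edges, where n = n and x = x and i = i] card_edge edge_subset
    by (auto simp: adj_tensor_def[abs_def] scycle_edges_def)
  ultimately show "tensor_apply k n (slap_tensor k s m) x i
       = real (scycle_deg k s m i) * x i ^ (k - 1) + (\<Sum>e\<in>{e\<in>edges. i \<in> e}. prod x (e - {i}))"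
    and "tensor_apply k n (lap_tensor k s m) x i
       = real (scycle_deg k s m i) * x i ^ (k - 1) - (\<Sum>e\<in>{e\<in>edges. i \<in> e}. prod x (e - {i}))"
    by (simp_all add: tensor_apply_add tensor_apply_diff)
qed

definition perron_vector :: "real \<Rightarrow> nat \<Rightarrow> real" where
  "perron_vector a v = (if 1 \<le> v mod d \<and> v mod d \<le> r then 1 else a)"

definition sign_pattern :: "nat \<Rightarrow> real" where
  "sign_pattern v = (if v mod d \<le> 1 then -1 else 1)"

lemma prod_perron_vector_edge:
  assumes "e \<in> edges"
  shows "prod (perron_vector a) e = a ^ (q * (d - r))"
proof -
  define f where "f c = (if 1 \<le> c \<and> c \<le> r then 1 else a)" for c
  obtain j where "e = edge j" using assms by (auto simp: scycle_edges_def)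
  then have "prod (perron_vector a) e = (\<Prod>c<d. f c) ^ q * (\<Prod>t\<in>{1..r}. f t)"
    using prod_edge_mod[of f j] by (simp add: perron_vector_def f_def)
  moreover have one: "(\<Prod>t\<in>{1..r}. f t) = 1"
    by (simp add: f_def)
  moreover have "(\<Prod>c<d. f c) = a ^ (d - r)"
  proof -
    have sub: "{1..r} \<subseteq> {..<d}" using r_lt_d by auto
    then have "(\<Prod>c<d. f c) = (\<Prod>c\<in>{..<d} - {1..r}. f c)"
      using prod.subset_diff[of "{1..r}" "{..<d}" f] one by simp
    also have "\<dots> = (\<Prod>c\<in>{..<d} - {1..r}. a)"
      by (rule prod.cong) (auto simp: f_def)
    also have "\<dots> = a ^ (d - r)"
      using card_Diff_subset[OF finite_atLeastAtMost sub] by simp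
    finally show ?thesis .
  qed
  ultimately show ?thesis by (simp add: power_mult[symmetric] mult.commute)
qed

lemma prod_sign_pattern_edge:
  assumes "e \<in> edges"
  shows "prod sign_pattern e = -1"
proof -
  define f :: "nat \<Rightarrow> real" where "f c = (if c \<le> 1 then -1 else 1)" for c
  obtain j where "e = edge j" using assms by (auto simp: scycle_edges_def)
  then have "prod sign_pattern e = (\<Prod>c<d. f c) ^ q * (\<Prod>t\<in>{1..r}. f t)"
    using prod_edge_mod[of f j] by (simp add: sign_pattern_def f_def)
  moreover have "{1..r} = insert 1 {2..r}" "{..<d} = insert 0 (insert 1 {2..<d})"
    using r_pos d_ge_2 by auto
  ultimately show ?thesis by (simp add: f_def)
qed

lemma exponent_identities: "k - (q + 1) * r = q * (d - r)" "q * (d - r) + (q + 1) * r = k"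
proof -
  have "q * r \<le> q * d" using r_lt_d by simp
  then show "k - (q + 1) * r = q * (d - r)" "q * (d - r) + (q + 1) * r = k"
    using k_eq by (simp_all add: diff_mult_distrib2 algebra_simps)
qed

lemma prod_edge_remove:
  fixes f :: "nat \<Rightarrow> real"
  assumes "e \<in> edges" and "i \<in> e" and "f i \<noteq> 0"
  shows "prod f (e - {i}) = prod f e / f i"
  using prod_diff1[of e f i] finite_subset[OF _ finite_lessThan] assms edge_subset
  by (auto simp: scycle_edges_def)

lemma signless_laplacian_perron_vector:
  fixes a :: real
  assumes "0 < a" and root: "real (q + 1) * a ^ k + a ^ ((q + 1) * r) - real q = 0" and "i < n"
  shows "tensor_apply k n (slap_tensor k s m) (perron_vector a) i
       = (real (q + 1) + real (q + 1) * a ^ (k - (q + 1) * r)) * perron_vector a i ^ (k - 1)"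
proof -
  define y where "y = perron_vector a"
  define P where "P = a ^ (q * (d - r))"
  have "y i \<noteq> 0" using \<open>0 < a\<close> by (simp add: y_def perron_vector_def)
  then have "prod y (e - {i}) = P / y i" if "e \<in> {e\<in>edges. i \<in> e}" for e
    using that prod_edge_remove prod_perron_vector_edge by (simp add: y_def P_def)
  then have apply_y: "tensor_apply k n (slap_tensor k s m) y i
      = real (scycle_deg k s m i) * (y i ^ (k - 1) + P / y i)"
    using tensor_apply_laplacians(1)[OF \<open>i < n\<close>]
    by (simp add: scycle_deg_def distrib_left)
  have P_eq: "a ^ (k - (q + 1) * r) = P"
    unfolding P_def exponent_identities ..
  show ?thesis
  proof (cases "1 \<le> i mod d \<and> i mod d \<le> r")
    case True
    then have "y i = 1" "scycle_deg k s m i = q + 1"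
      using degree[OF \<open>i < n\<close>] by (simp_all add: y_def perron_vector_def)
    then show ?thesis
      using apply_y P_eq by (simp add: distrib_left y_def)
  next
    case False
    then have y_i: "y i = a" and deg: "scycle_deg k s m i = q"
      using degree[OF \<open>i < n\<close>] by (auto simp: y_def perron_vector_def)
    have a_k: "a ^ k = a * a ^ (k - 1)"
      using k_pos by (simp add: power_eq_if)
    have q_eq: "real q = (real q + 1) * a ^ k + a ^ ((q + 1) * r)"
      using root by (simp add: add.commute)
    have P_times: "P * a ^ ((q + 1) * r) = a ^ k"
      unfolding P_def power_add[symmetric] exponent_identities ..
    have "real q * (a ^ (k - 1) + P / a) = real q * (a ^ k + P) / a"
      unfolding a_k using \<open>0 < a\<close> by (simp add: field_simps)
    also have "\<dots> = (real q + 1) * (1 + P) * a ^ k / a"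
      using root_identity_rescaled[OF q_eq P_times] by simp
    also have "\<dots> = (real (q + 1) + real (q + 1) * P) * a ^ (k - 1)"
      unfolding a_k using \<open>0 < a\<close> by (simp add: field_simps)
    finally have "real q * (a ^ (k - 1) + P / a) = (real (q + 1) + real (q + 1) * P) * a ^ (k - 1)" .
    then show ?thesis
      using apply_y y_i deg P_eq by (simp add: y_def)
  qed
qed

lemma laplacian_signed_perron_vector:
  fixes a :: real
  assumes "0 < a" and root: "real (q + 1) * a ^ k + a ^ ((q + 1) * r) - real q = 0"
    and "i < n" and "even k"
  shows "tensor_apply k n (lap_tensor k s m) (\<lambda>v. sign_pattern v * perron_vector a v) i
       = (real (q + 1) + real (q + 1) * a ^ (k - (q + 1) * r))
         * (sign_pattern i * perron_vector a i) ^ (k - 1)"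
proof -
  define y where "y = perron_vector a"
  define z where "z v = sign_pattern v * y v" for v
  have sign_sq: "sign_pattern i * sign_pattern i = 1"
    by (simp add: sign_pattern_def)
  have sign_pow: "sign_pattern i ^ (k - 1) = sign_pattern i"
    using \<open>even k\<close> k_pos by (simp add: sign_pattern_def)
  have "prod z (e - {i}) = - sign_pattern i * prod y (e - {i})" if "e \<in> {e\<in>edges. i \<in> e}" for e
  proof -
    have "prod sign_pattern (e - {i}) = - sign_pattern i"
      using that prod_edge_remove[of e i sign_pattern] prod_sign_pattern_edge
      by (auto simp: sign_pattern_def)
    then show ?thesis by (simp add: z_def prod.distrib)
  qed
  then have sum_z: "(\<Sum>e\<in>{e\<in>edges. i \<in> e}. prod z (e - {i}))
      = - sign_pattern i * (\<Sum>e\<in>{e\<in>edges. i \<in> e}. prod y (e - {i}))"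
    by (simp add: sum_distrib_left)
  have "tensor_apply k n (lap_tensor k s m) z i
      = sign_pattern i * tensor_apply k n (slap_tensor k s m) y i"
    unfolding tensor_apply_laplacians[OF \<open>i < n\<close>] sum_z
    by (simp add: z_def power_mult_distrib sign_pow[simplified] algebra_simps)
  also have "\<dots> = (real (q + 1) + real (q + 1) * a ^ (k - (q + 1) * r)) * z i ^ (k - 1)"
    using signless_laplacian_perron_vector[OF \<open>0 < a\<close> root \<open>i < n\<close>]
    by (simp add: y_def z_def power_mult_distrib sign_pow[simplified])
  finally show ?thesis by (simp add: z_def[abs_def] y_def)
qed

lemma largest_H_eigenvalue_signless_laplacian:
  fixes a :: real
  assumes "0 < a" and "real (q + 1) * a ^ k + a ^ ((q + 1) * r) - real q = 0"
  shows "is_largest_H_eigenvalue k n (slap_tensor k s m)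
           (real (q + 1) + real (q + 1) * a ^ (k - (q + 1) * r))"
proof -
  have pos: "\<forall>v<n. 0 < perron_vector a v"
    using \<open>0 < a\<close> by (simp add: perron_vector_def)
  have eigen: "\<forall>i<n. tensor_apply k n (slap_tensor k s m) (perron_vector a) i
      = (real (q + 1) + real (q + 1) * a ^ (k - (q + 1) * r)) * perron_vector a i ^ (k - 1)"
    using signless_laplacian_perron_vector[OF assms] by blast
  show ?thesis
  proof (rule is_largest_H_eigenvalueI[OF _ pos _ eigen])
    show "is_H_eigenvalue k n (slap_tensor k s m) (real (q + 1) + real (q + 1) * a ^ (k - (q + 1) * r))"
      unfolding is_H_eigenvalue_def using pos eigen n_pos by (intro exI[of _ "perron_vector a"]) force
  qed (rule abs_signless_laplacian_le)
qed

lemma largest_H_eigenvalue_laplacian: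
  fixes a :: real
  assumes "0 < a" and "real (q + 1) * a ^ k + a ^ ((q + 1) * r) - real q = 0" and "even k"
  shows "is_largest_H_eigenvalue k n (lap_tensor k s m)
           (real (q + 1) + real (q + 1) * a ^ (k - (q + 1) * r))"
proof -
  have pos: "\<forall>v<n. 0 < perron_vector a v"
    using \<open>0 < a\<close> by (simp add: perron_vector_def)
  have eigen: "\<forall>i<n. tensor_apply k n (slap_tensor k s m) (perron_vector a) i
      = (real (q + 1) + real (q + 1) * a ^ (k - (q + 1) * r)) * perron_vector a i ^ (k - 1)"
    using signless_laplacian_perron_vector[OF assms(1,2)] by blast
  have "is_H_eigenvalue k n (lap_tensor k s m) (real (q + 1) + real (q + 1) * a ^ (k - (q + 1) * r))"
    unfolding is_H_eigenvalue_def
  proof (intro exI[of _ "\<lambda>v. sign_pattern v * perron_vector a v"] conjI)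
    show "\<exists>i<n. sign_pattern i * perron_vector a i \<noteq> 0"
      using n_pos \<open>0 < a\<close> by (auto simp: sign_pattern_def perron_vector_def)
  qed (use laplacian_signed_perron_vector[OF assms(1,2) _ assms(3)] in blast)
  then show ?thesis
    by (rule is_largest_H_eigenvalueI[OF _ pos _ eigen]) (rule abs_laplacian_le_signless_laplacian)
qed

end

theorem theorem5p2:
  fixes k s m q r :: nat
  assumes "k \<ge> 3" and "k < 2 * s" and "s < k - 1"
    and "m * (k - s) \<ge> 2 * k - s"
    and "k = q * (k - s) + r" and "1 \<le> r" and "r < k - s"
  shows "(\<exists>!a::real. 0 < a \<and> a < 1 \<and>
            real (q + 1) * a ^ k + a ^ ((q + 1) * r) - real q = 0)
       \<and> (\<forall>a::real. 0 < a \<and> a < 1 \<and>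
            real (q + 1) * a ^ k + a ^ ((q + 1) * r) - real q = 0 \<longrightarrow>
            is_largest_H_eigenvalue k (m * (k - s)) (slap_tensor k s m)
              (real (q + 1) + real (q + 1) * a ^ (k - (q + 1) * r))
          \<and> (even k \<longrightarrow>
            is_largest_H_eigenvalue k (m * (k - s)) (lap_tensor k s m)
              (real (q + 1) + real (q + 1) * a ^ (k - (q + 1) * r))))"
proof -
  interpret s_cycle k s m q r "k - s" "m * (k - s)"
    using assms by unfold_locales auto
  have "\<exists>!a::real. 0 < a \<and> a < 1 \<and> real (q + 1) * a ^ k + a ^ ((q + 1) * r) - real q = 0"
    using q_pos k_pos r_pos by (intro unique_root_in_unit_interval) auto
  then show ?thesis
    using largest_H_eigenvalue_signless_laplacian largest_H_eigenvalue_laplacian by blast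
qed

end
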